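(* In the SLAR setting, let $(\delta^*,w^* )$ be any Nash equilibrium of the SLAR game. Then for every non-robust feature $x_i$ we have $w_i^*=0$.
   Context: SLAR setting: $(x,y)$ is drawn from a distribution $\mathcal D$ on $\mathbb R^d\times\{-1,+1\}$, $x=(x_1,\dots,x_d)$ with finite second moments, such that (A1) for each $i$ there is a constant $\mu_i$ with $\mathbb E[x_i\mid y]=y\mu_i$ for $y\in\{-1,1\}$, and (A2) the coordinates $x_1,\dots,x_d$ are mutually independent conditionally on $y$. Fix $\lambda>0$ and a perturbation budget $\varepsilon>0$; $\mathcal B(\varepsilon)=\{a\in\mathbb R^d:\|a\|_\infty\le\varepsilon\}$. A perturbation function is a measurable map $\delta$ assigning to each $(x,y)$ a vector $\delta(x,y)\in\mathcal B(\varepsilon)$. For a perturbation function $\delta$ and $w\in\mathbb R^d$ let $U(\delta,w)=\mathbb E_{(x,y)\sim\mathcal D}[\max(0,1-yw^\top(x+\delta(x,y)))]+\frac{\lambda}{2}\|w\|_2^2$. A feature $x_i$ is non-robust if $|\mu_i|\le\varepsilon$, and robust otherwise. SLAR game: the adversary chooses a perturbation function $\delta$, the defender chooses $w\in\mathbb R^d$; the adversary's payoff is $U(\delta,w)$ and the defender's is $-U(\delta,w)$. A pair $(\delta^*,w^* )$ is a (pure) Nash equilibrium if $\sup_\delta U(\delta,w^* )\le U(\delta^*,w^* )\le\inf_{w\in\mathbb R^d}U(\delta^*,w)$, the supremum over all perturbation functions. *)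

theory Defs
  imports "HOL-Probability.Probability"
begin

definition slar_dist :: "((real^'d) \<times> real) measure \<Rightarrow> real^'d \<Rightarrow> bool" where
  "slar_dist D \<mu> \<longleftrightarrow>
     prob_space D \<and> sets D = sets borel \<and>
     (AE p in D. snd p \<in> {-1, 1}) \<and>
     (\<forall>i. integrable D (\<lambda>p. (fst p $ i)\<^sup>2)) \<and>
     \<comment> \<open>(A1): E[x_i | y] = y mu_i, written via E[x_i 1{y=y0}] = y0 mu_i P(y=y0)\<close>
     (\<forall>i. \<forall>y0\<in>{-1, 1::real}.
        integral\<^sup>L D (\<lambda>p. fst p $ i * indicator {q. snd q = y0} p)
          = y0 * \<mu> $ i * measure D {p \<in> space D. snd p = y0}) \<and>
     \<comment> \<open>(A2): coordinates independent conditionally on y\<close>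
     (\<forall>y0\<in>{-1, 1::real}. measure D {p \<in> space D. snd p = y0} > 0 \<longrightarrow>
        prob_space.indep_vars (uniform_measure D {p \<in> space D. snd p = y0})
          (\<lambda>_. borel) (\<lambda>i p. fst p $ i) UNIV)"

definition perturbation :: "((real^'d) \<times> real) measure \<Rightarrow> real \<Rightarrow> ((real^'d) \<times> real \<Rightarrow> real^'d) \<Rightarrow> bool" where
  "perturbation D \<epsilon> \<delta> \<longleftrightarrow>
     \<delta> \<in> borel_measurable D \<and> (\<forall>p. \<forall>i. \<bar>\<delta> p $ i\<bar> \<le> \<epsilon>)"

definition slar_U :: "((real^'d) \<times> real) measure \<Rightarrow> real \<Rightarrow> ((real^'d) \<times> real \<Rightarrow> real^'d) \<Rightarrow> real^'d \<Rightarrow> real" where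
  "slar_U D lam \<delta> w =
     integral\<^sup>L D (\<lambda>p. max 0 (1 - snd p * (w \<bullet> (fst p + \<delta> p)))) + lam / 2 * (norm w)\<^sup>2"

definition slar_nash :: "((real^'d) \<times> real) measure \<Rightarrow> real \<Rightarrow> real \<Rightarrow> ((real^'d) \<times> real \<Rightarrow> real^'d) \<Rightarrow> real^'d \<Rightarrow> bool" where
  "slar_nash D lam \<epsilon> \<delta>s ws \<longleftrightarrow>
     perturbation D \<epsilon> \<delta>s \<and>
     (\<forall>\<delta>. perturbation D \<epsilon> \<delta> \<longrightarrow> slar_U D lam \<delta> ws \<le> slar_U D lam \<delta>s ws) \<and>
     (\<forall>w. slar_U D lam \<delta>s ws \<le> slar_U D lam \<delta>s w)"

end

theory Submission
  imports Defs
begin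

text \<open>
  Let \<open>w'\<close> be \<open>w\<close> with its \<open>i\<close>-th coordinate set to zero and \<open>t = w\<^sub>i\<close>. Against a
  fixed \<open>w\<close> the best adversary shifts every feature by \<open>\<epsilon>\<close> against the label along
  \<open>sgn w\<close>, so its value is the robust hinge risk \<open>R(w) = E[max 0 (1 - y w\<cdot>x + \<epsilon>|w|\<^sub>1)]\<close>
  plus the regulariser. The hinge argument of \<open>R(w)\<close> exceeds that of \<open>R(w')\<close> by
  \<open>c + t (\<mu>\<^sub>i - y x\<^sub>i)\<close>, where \<open>c = \<epsilon>|t| - t \<mu>\<^sub>i \<ge> 0\<close> for a non-robust feature. By (A1)
  and (A2), \<open>\<mu>\<^sub>i - y x\<^sub>i\<close> has mean zero given \<open>y\<close> and the other features, so the
  subgradient bound \<open>max 0 (a + c + t d) \<ge> max 0 a + t d [a + c > 0]\<close> integrates to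
  \<open>R(w') \<le> R(w)\<close>. At an equilibrium \<open>(\<delta>\<^sup>*, w\<^sup>*)\<close> therefore
  \<open>R(w\<^sup>*) + \<lambda>/2 |w\<^sup>*|\<^sup>2 \<le> U(\<delta>\<^sup>*, w\<^sup>*) \<le> U(\<delta>\<^sup>*, w') \<le> R(w') + \<lambda>/2 |w'|\<^sup>2 \<le> R(w\<^sup>*) + \<lambda>/2 |w'|\<^sup>2\<close>,
  that is \<open>\<lambda>/2 (w\<^sup>*\<^sub>i)\<^sup>2 \<le> 0\<close>.
\<close>

lemma
  fixes f :: "'a \<Rightarrow> real"
  assumes "finite_measure M" and S: "S \<in> sets M" and pos: "measure M S > 0"
    and f: "integrable M f"
  shows integrable_uniform_measure: "integrable (uniform_measure M S) f"
    and integral_uniform_measure: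
      "integral\<^sup>L (uniform_measure M S) f = integral\<^sup>L M (\<lambda>x. f x * indicator S x) / measure M S"
proof -
  interpret finite_measure M by fact
  have [measurable]: "S \<in> sets M" "f \<in> borel_measurable M"
    using S f by auto
  have dens: "uniform_measure M S = density M (\<lambda>x. ennreal (indicator S x / measure M S))"
    unfolding uniform_measure_def
    by (intro arg_cong[where f="density M"] ext)
       (simp add: emeasure_eq_measure divide_ennreal[symmetric] pos ennreal_indicator)
  have nonneg: "AE x in M. 0 \<le> indicator S x / measure M S"
    using pos by auto
  have "integrable M (\<lambda>x. (1 / measure M S) *\<^sub>R (indicator S x *\<^sub>R f x))"
    using S f by (intro integrable_scaleR_right integrable_mult_indicator)
  then show "integrable (uniform_measure M S) f"
    unfolding dens using f by (subst integrable_density) (auto simp: nonneg)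
  show "integral\<^sup>L (uniform_measure M S) f = integral\<^sup>L M (\<lambda>x. f x * indicator S x) / measure M S"
    unfolding dens using S f by (subst integral_density) (auto simp: nonneg mult.commute)
qed

lemma (in prob_space) integral_mult_indep_coord:
  fixes X :: "'i \<Rightarrow> 'a \<Rightarrow> real" and G :: "('i \<Rightarrow> real) \<Rightarrow> real"
  assumes indep: "indep_vars (\<lambda>_. borel) X UNIV"
    and G: "G \<in> borel_measurable (PiM (UNIV - {i}) (\<lambda>_. borel))" and bound: "\<And>z. \<bar>G z\<bar> \<le> B"
    and X: "integrable M (X i)"
  shows "integrable M (\<lambda>\<omega>. G (restrict (\<lambda>j. X j \<omega>) (UNIV - {i})) * X i \<omega>)"
    and "(\<integral>\<omega>. G (restrict (\<lambda>j. X j \<omega>) (UNIV - {i})) * X i \<omega> \<partial>M)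
           = (\<integral>\<omega>. G (restrict (\<lambda>j. X j \<omega>) (UNIV - {i})) \<partial>M) * integral\<^sup>L M (X i)"
proof -
  have "indep_var (PiM (UNIV - {i}) (\<lambda>_. borel)) (\<lambda>\<omega>. restrict (\<lambda>j. X j \<omega>) (UNIV - {i}))
          (PiM {i} (\<lambda>_. borel)) (\<lambda>\<omega>. restrict (\<lambda>j. X j \<omega>) {i})"
    by (rule indep_var_restrict[OF indep]) auto
  from indep_var_compose[OF this G, of "\<lambda>f. f i" borel]
  have ind: "indep_var borel (\<lambda>\<omega>. G (restrict (\<lambda>j. X j \<omega>) (UNIV - {i}))) borel (X i)"
    by (simp add: comp_def)
  have "(\<lambda>\<omega>. restrict (\<lambda>j. X j \<omega>) (UNIV - {i})) \<in> measurable M (PiM (UNIV - {i}) (\<lambda>_. borel))"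
    using indep by (intro measurable_restrict) (auto simp: indep_vars_def)
  then have "integrable M (\<lambda>\<omega>. G (restrict (\<lambda>j. X j \<omega>) (UNIV - {i})))"
    using G bound by (intro integrable_const_bound[where B=B]) auto
  with ind X show "integrable M (\<lambda>\<omega>. G (restrict (\<lambda>j. X j \<omega>) (UNIV - {i})) * X i \<omega>)"
    and "(\<integral>\<omega>. G (restrict (\<lambda>j. X j \<omega>) (UNIV - {i})) * X i \<omega> \<partial>M)
           = (\<integral>\<omega>. G (restrict (\<lambda>j. X j \<omega>) (UNIV - {i})) \<partial>M) * integral\<^sup>L M (X i)"
    by (auto intro: indep_var_integrable indep_var_lebesgue_integral)
qed

lemma integrable_bounded_mult:
  fixes f g :: "'a \<Rightarrow> real"
  assumes f: "integrable M f" and g: "g \<in> borel_measurable M" and bound: "\<And>x. \<bar>g x\<bar> \<le> B"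
  shows "integrable M (\<lambda>x. g x * f x)"
proof (rule Bochner_Integration.integrable_bound[of M "\<lambda>x. B * \<bar>f x\<bar>"])
  show "integrable M (\<lambda>x. B * \<bar>f x\<bar>)"
    using f by (intro Bochner_Integration.integrable_mult_right integrable_abs)
  show "AE x in M. norm (g x * f x) \<le> norm (B * \<bar>f x\<bar>)"
    by (intro AE_I2) (simp add: abs_mult mult_right_mono[OF order_trans[OF bound abs_ge_self]])
qed (use f g in auto)

lemma hinge_shift_lower_bound:
  fixes a c t d :: real
  assumes "0 \<le> c"
  shows "max 0 a + t * (if 0 < a + c then d else 0) \<le> max 0 (a + c + t * d)"
  using assms by auto

definition norm_l1 :: "real^'n \<Rightarrow> real" where
  "norm_l1 w = (\<Sum>j\<in>UNIV. \<bar>w $ j\<bar>)"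

lemma abs_inner_le_norm_l1:
  assumes "\<And>j. \<bar>v $ j\<bar> \<le> \<epsilon>"
  shows "\<bar>w \<bullet> v\<bar> \<le> \<epsilon> * norm_l1 w"
proof -
  have "\<bar>w \<bullet> v\<bar> \<le> (\<Sum>j\<in>UNIV. \<bar>w $ j\<bar> * \<bar>v $ j\<bar>)"
    unfolding inner_vec_def inner_real_def abs_mult[symmetric] by (rule sum_abs)
  also have "\<dots> \<le> (\<Sum>j\<in>UNIV. \<bar>w $ j\<bar> * \<epsilon>)"
    by (intro sum_mono mult_left_mono assms) simp
  finally show ?thesis
    by (simp add: norm_l1_def sum_distrib_left mult.commute)
qed

lemma inner_sgn_eq_norm_l1: "w \<bullet> (\<chi> j. sgn (w $ j)) = norm_l1 w"
  unfolding inner_vec_def norm_l1_def by (intro sum.cong) (auto simp: sgn_if)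

definition drop_coord :: "'n \<Rightarrow> real^'n \<Rightarrow> real^'n" where
  "drop_coord i w = (\<chi> j. if j = i then 0 else w $ j)"

lemma sum_split_coord:
  fixes f :: "'n::finite \<Rightarrow> 'a::comm_monoid_add"
  shows "(\<Sum>j\<in>UNIV. f j) = f i + (\<Sum>j\<in>UNIV. if j = i then 0 else f j)"
  by (simp add: sum.If_cases sum.remove Compl_eq_Diff_UNIV)

lemma inner_drop_coord: "w \<bullet> x = drop_coord i w \<bullet> x + w $ i * x $ i"
  unfolding inner_vec_def drop_coord_def inner_real_def
  by (subst sum_split_coord[of _ i]) (auto intro: sum.cong)

lemma norm_l1_drop_coord: "norm_l1 w = norm_l1 (drop_coord i w) + \<bar>w $ i\<bar>"
  unfolding norm_l1_def drop_coord_def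
  by (subst sum_split_coord[of _ i]) (auto intro: sum.cong)

lemma norm_drop_coord: "(norm w)\<^sup>2 = (norm (drop_coord i w))\<^sup>2 + (w $ i)\<^sup>2"
  unfolding power2_norm_eq_inner inner_vec_def drop_coord_def inner_real_def
  by (subst sum_split_coord[of _ i]) (auto simp: power2_eq_square intro: sum.cong)

definition coords_except :: "'n \<Rightarrow> real^'n \<Rightarrow> 'n \<Rightarrow> real" where
  "coords_except i x = restrict (\<lambda>j. x $ j) (UNIV - {i})"

lemma inner_drop_coord_eq_sum_coords_except:
  "drop_coord i w \<bullet> x = (\<Sum>j\<in>UNIV - {i}. w $ j * coords_except i x j)"
  unfolding inner_vec_def inner_real_def drop_coord_def coords_except_def
  by (subst sum.remove[of UNIV i]) auto

text \<open>This is \<open>-y \<epsilon> sgn w\<close> on the support \<open>y = \<plusminus>1\<close>; the case split on the sign of \<open>y\<close>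
  keeps it inside the \<open>\<epsilon>\<close>-ball everywhere, as a perturbation function must be.\<close>

definition worst_perturbation :: "real \<Rightarrow> real^'d \<Rightarrow> (real^'d) \<times> real \<Rightarrow> real^'d" where
  "worst_perturbation \<epsilon> w p = (if 0 \<le> snd p then - \<epsilon> else \<epsilon>) *\<^sub>R (\<chi> j. sgn (w $ j))"

definition robust_hinge_risk :: "((real^'d) \<times> real) measure \<Rightarrow> real \<Rightarrow> real^'d \<Rightarrow> real" where
  "robust_hinge_risk D \<epsilon> w = (\<integral>p. max 0 (1 - snd p * (w \<bullet> fst p) + \<epsilon> * norm_l1 w) \<partial>D)"

lemma hinge_perturbed_le_robust:
  fixes y :: real
  assumes "y = 1 \<or> y = -1" and "\<And>j. \<bar>\<delta> $ j\<bar> \<le> \<epsilon>"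
  shows "max 0 (1 - y * (w \<bullet> (x + \<delta>))) \<le> max 0 (1 - y * (w \<bullet> x) + \<epsilon> * norm_l1 w)"
proof -
  have "- (y * (w \<bullet> \<delta>)) \<le> \<epsilon> * norm_l1 w"
    using abs_inner_le_norm_l1[OF assms(2), of w] assms(1) by auto
  then show ?thesis
    by (simp add: inner_add_right algebra_simps)
qed

lemma hinge_worst_perturbation:
  fixes y :: real
  assumes "y = 1 \<or> y = -1"
  shows "max 0 (1 - y * (w \<bullet> (x + worst_perturbation \<epsilon> w (x, y))))
       = max 0 (1 - y * (w \<bullet> x) + \<epsilon> * norm_l1 w)"
  using assms by (auto simp: worst_perturbation_def inner_add_right inner_sgn_eq_norm_l1 algebra_simps)

locale slar =
  fixes D :: "((real^'d) \<times> real) measure" and \<mu> :: "real^'d"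
  assumes slar_dist: "slar_dist D \<mu>"
begin

sublocale prob_space D
  using slar_dist by (simp add: slar_dist_def)

lemma sets_D: "sets D = sets borel"
  using slar_dist by (simp add: slar_dist_def)

lemma space_D: "space D = UNIV"
  using sets_eq_imp_space_eq[OF sets_D] by simp

lemma measurable_fst_snd [measurable]:
  "fst \<in> borel_measurable D" "snd \<in> borel_measurable D"
  unfolding measurable_cong_sets[OF sets_D refl]
  by (auto intro!: borel_measurable_continuous_onI continuous_intros)

lemma measurable_feature [measurable]: "(\<lambda>p. fst p $ j) \<in> borel_measurable D"
  using measurable_compose[OF measurable_fst_snd(1) borel_measurable_nth] .

lemma label_set_sets [measurable]: "{p. snd p = y0} \<in> sets D"
  using measurable_sets[OF measurable_fst_snd(2), of "{y0}"] by (simp add: space_D vimage_def)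

lemma AE_label: "AE p in D. snd p = 1 \<or> snd p = -1"
proof -
  have "AE p in D. snd p \<in> {-1, 1}"
    using slar_dist by (simp add: slar_dist_def)
  then show ?thesis by eventually_elim auto
qed

lemma integrable_feature: "integrable D (\<lambda>p. fst p $ j)"
proof (rule square_integrable_imp_integrable)
  show "(\<lambda>p. fst p $ j) \<in> borel_measurable D"
    by measurable
  show "integrable D (\<lambda>p. (fst p $ j)\<^sup>2)"
    using slar_dist by (simp add: slar_dist_def)
qed

lemma integrable_inner_features: "integrable D (\<lambda>p. w \<bullet> fst p)"
  unfolding inner_vec_def inner_real_def
  by (intro Bochner_Integration.integrable_sum Bochner_Integration.integrable_mult_right integrable_feature)

lemma measurable_coords_except [measurable]:
  "(\<lambda>p. coords_except i (fst p)) \<in> measurable D (PiM (UNIV - {i}) (\<lambda>_. borel))"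
  unfolding coords_except_def by (rule measurable_restrict) measurable

lemma label_set_eq: "{p \<in> space D. snd p = y0} = {p. snd p = y0}"
  by (simp add: space_D)

lemma conditional_features_indep:
  assumes "y0 \<in> {-1, 1}" and "measure D {p. snd p = y0} > 0"
  shows "prob_space.indep_vars (uniform_measure D {p. snd p = y0}) (\<lambda>_. borel) (\<lambda>j p. fst p $ j) UNIV"
  using slar_dist assms unfolding slar_dist_def label_set_eq by blast

lemma conditional_feature_mean:
  assumes "y0 \<in> {-1, 1}" and "measure D {p. snd p = y0} > 0"
  shows "(\<integral>p. fst p $ i \<partial>uniform_measure D {p. snd p = y0}) = y0 * \<mu> $ i"
proof -
  have "(\<integral>p. fst p $ i * indicator {p. snd p = y0} p \<partial>D) = y0 * \<mu> $ i * measure D {p. snd p = y0}"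
    using slar_dist assms(1) unfolding slar_dist_def label_set_eq by blast
  then show ?thesis
    using assms(2)
    by (simp add: integral_uniform_measure[OF finite_measure_axioms label_set_sets _ integrable_feature])
qed

lemma integral_centered_feature_given_label:
  assumes y0: "y0 \<in> {-1, 1}"
    and G: "G \<in> borel_measurable (PiM (UNIV - {i}) (\<lambda>_. borel))" and bound: "\<And>z. \<bar>G z\<bar> \<le> B"
  defines "H \<equiv> \<lambda>p. G (coords_except i (fst p)) * (\<mu> $ i - y0 * fst p $ i) * indicator {p. snd p = y0} p"
  shows "integrable D H" and "integral\<^sup>L D H = 0"
proof -
  define Gx :: "(real^'d) \<times> real \<Rightarrow> real" where "Gx = (\<lambda>p. G (coords_except i (fst p)))"
  have [measurable]: "Gx \<in> borel_measurable D"
    unfolding Gx_def using measurable_compose[OF measurable_coords_except G] by (simp add: comp_def)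
  have Gx_bound: "\<bar>Gx p\<bar> \<le> B" for p
    by (simp add: Gx_def bound)
  have "integrable D Gx"
    by (rule integrable_const_bound[of Gx B]) (use Gx_bound in auto)
  moreover have "integrable D (\<lambda>p. Gx p * fst p $ i)"
    by (rule integrable_bounded_mult[OF integrable_feature _ Gx_bound]) measurable
  ultimately have "integrable D (\<lambda>p. \<mu> $ i * Gx p - y0 * (Gx p * fst p $ i))"
    by (intro Bochner_Integration.integrable_diff Bochner_Integration.integrable_mult_right)
  then have int: "integrable D (\<lambda>p. Gx p * (\<mu> $ i - y0 * fst p $ i))"
    by (simp add: algebra_simps)
  then show "integrable D H"
    unfolding H_def Gx_def by (intro integrable_real_mult_indicator) auto
  show "integral\<^sup>L D H = 0"
  proof (cases "measure D {p. snd p = y0} = 0")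
    case True
    then have "AE p in D. p \<notin> {p. snd p = y0}"
      by (intro AE_not_in) (simp add: null_sets_def emeasure_eq_measure)
    then show ?thesis
      unfolding H_def by (intro integral_eq_zero_AE) (auto elim: AE_mp)
  next
    case False
    then have pos: "measure D {p. snd p = y0} > 0"
      using measure_nonneg[of D "{p. snd p = y0}"] by linarith
    define M where "M = uniform_measure D {p. snd p = y0}"
    interpret M: prob_space M
      unfolding M_def using pos
      by (intro prob_space_uniform_measure) (auto simp: emeasure_eq_measure)
    note uniform = integral_uniform_measure[OF finite_measure_axioms label_set_sets pos]
      integrable_uniform_measure[OF finite_measure_axioms label_set_sets pos]
    have "integrable M (\<lambda>p. fst p $ i)"
      unfolding M_def by (rule uniform(2)[OF integrable_feature])
    note indep_prod = M.integral_mult_indep_coord[OF conditional_features_indep[OF y0 pos, folded M_def]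
        G bound this, folded coords_except_def Gx_def]
    have "integrable M (\<lambda>p. Gx p * fst p $ i)"
      and prod: "(\<integral>p. Gx p * fst p $ i \<partial>M) = integral\<^sup>L M Gx * (\<integral>p. fst p $ i \<partial>M)"
      using indep_prod by (simp_all add: Gx_def)
    moreover have "integrable M Gx"
      using Gx_bound by (intro M.integrable_const_bound[of Gx B]) (auto simp: M_def)
    ultimately have "(\<integral>p. Gx p * (\<mu> $ i - y0 * fst p $ i) \<partial>M)
        = \<mu> $ i * integral\<^sup>L M Gx - y0 * (\<integral>p. Gx p * fst p $ i \<partial>M)"
      by (simp add: right_diff_distrib mult.left_commute)
    also have "\<dots> = 0"
      using y0 unfolding prod conditional_feature_mean[OF y0 pos, folded M_def] by auto
    finally have "(\<integral>p. Gx p * (\<mu> $ i - y0 * fst p $ i) \<partial>M) = 0" .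
    then show ?thesis
      using pos unfolding M_def uniform(1)[OF int] by (simp add: H_def Gx_def)
  qed
qed

lemma integral_centered_feature:
  assumes G: "\<And>y. G y \<in> borel_measurable (PiM (UNIV - {i}) (\<lambda>_. borel))"
    and bound: "\<And>y z. \<bar>G y z\<bar> \<le> B"
    and measurable: "(\<lambda>p. G (snd p) (coords_except i (fst p))) \<in> borel_measurable D"
  defines "H \<equiv> \<lambda>p. G (snd p) (coords_except i (fst p)) * (\<mu> $ i - snd p * fst p $ i)"
  shows "integrable D H" and "integral\<^sup>L D H = 0"
proof -
  define H' where "H' = (\<lambda>y0 p. G y0 (coords_except i (fst p)) * (\<mu> $ i - y0 * fst p $ i)
    * indicator {p. snd p = y0} p)"
  have label_part: "integrable D (H' y0)" "integral\<^sup>L D (H' y0) = 0" if "y0 \<in> {-1, 1}" for y0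
    unfolding H'_def by (fact integral_centered_feature_given_label[OF that G bound])+
  have int: "integrable D (\<lambda>p. H' 1 p + H' (-1) p)"
    using label_part(1) by auto
  have ae: "AE p in D. H' 1 p + H' (-1) p = H p"
    using AE_label by eventually_elim (auto simp: H'_def H_def)
  have "H \<in> borel_measurable D"
    unfolding H_def using measurable by measurable
  then show "integrable D H"
    by (rule integrable_cong_AE_imp[OF int _ ae])
  have "integral\<^sup>L D H = (\<integral>p. H' 1 p + H' (-1) p \<partial>D)"
    using ae \<open>H \<in> borel_measurable D\<close> int by (intro integral_cong_AE) (auto elim: AE_mp)
  also have "\<dots> = 0"
    using label_part by (simp add: Bochner_Integration.integral_add)
  finally show "integral\<^sup>L D H = 0" .
qed

lemma perturbation_worst_perturbation:
  assumes "0 \<le> \<epsilon>"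
  shows "perturbation D \<epsilon> (worst_perturbation \<epsilon> w)"
  unfolding perturbation_def
proof
  show "worst_perturbation \<epsilon> w \<in> borel_measurable D"
    unfolding worst_perturbation_def by measurable
  show "\<forall>p j. \<bar>worst_perturbation \<epsilon> w p $ j\<bar> \<le> \<epsilon>"
    using assms by (auto simp: worst_perturbation_def abs_mult sgn_if)
qed

lemma integrable_robust_hinge:
  assumes "0 \<le> \<epsilon>"
  shows "integrable D (\<lambda>p. max 0 (1 - snd p * (w \<bullet> fst p) + \<epsilon> * norm_l1 w))"
proof (rule Bochner_Integration.integrable_bound)
  show "integrable D (\<lambda>p. 1 + \<bar>w \<bullet> fst p\<bar> + \<epsilon> * norm_l1 w)"
    by (intro Bochner_Integration.integrable_add integrable_abs integrable_inner_features) auto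
  show "AE p in D. norm (max 0 (1 - snd p * (w \<bullet> fst p) + \<epsilon> * norm_l1 w))
      \<le> norm (1 + \<bar>w \<bullet> fst p\<bar> + \<epsilon> * norm_l1 w)"
    using AE_label
  proof eventually_elim
    case (elim p)
    moreover have "0 \<le> \<epsilon> * norm_l1 w"
      using assms by (simp add: norm_l1_def sum_nonneg)
    ultimately show ?case by auto
  qed
qed measurable

lemma integrable_hinge:
  assumes "perturbation D \<epsilon> \<delta>"
  shows "integrable D (\<lambda>p. max 0 (1 - snd p * (w \<bullet> (fst p + \<delta> p))))"
proof -
  have [measurable]: "\<delta> \<in> borel_measurable D" and \<delta>: "\<And>p j. \<bar>\<delta> p $ j\<bar> \<le> \<epsilon>"
    using assms by (auto simp: perturbation_def)
  have "0 \<le> \<epsilon>"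
    using \<delta> by (meson abs_ge_zero order_trans)
  show ?thesis
  proof (rule Bochner_Integration.integrable_bound[OF integrable_robust_hinge[OF \<open>0 \<le> \<epsilon>\<close>]])
    show "AE p in D. norm (max 0 (1 - snd p * (w \<bullet> (fst p + \<delta> p))))
        \<le> norm (max 0 (1 - snd p * (w \<bullet> fst p) + \<epsilon> * norm_l1 w))"
      using AE_label by eventually_elim (use hinge_perturbed_le_robust \<delta> in force)
  qed measurable
qed

lemma slar_U_le_robust:
  assumes "perturbation D \<epsilon> \<delta>"
  shows "slar_U D lam \<delta> w \<le> robust_hinge_risk D \<epsilon> w + lam / 2 * (norm w)\<^sup>2"
proof -
  have \<delta>: "\<And>p j. \<bar>\<delta> p $ j\<bar> \<le> \<epsilon>"
    using assms by (auto simp: perturbation_def)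
  then have "0 \<le> \<epsilon>"
    by (meson abs_ge_zero order_trans)
  have "AE p in D. max 0 (1 - snd p * (w \<bullet> (fst p + \<delta> p)))
      \<le> max 0 (1 - snd p * (w \<bullet> fst p) + \<epsilon> * norm_l1 w)"
    using AE_label by eventually_elim (rule hinge_perturbed_le_robust, auto simp: \<delta>)
  then have "(\<integral>p. max 0 (1 - snd p * (w \<bullet> (fst p + \<delta> p))) \<partial>D) \<le> robust_hinge_risk D \<epsilon> w"
    unfolding robust_hinge_risk_def
    by (rule integral_mono_AE[OF integrable_hinge[OF assms] integrable_robust_hinge[OF \<open>0 \<le> \<epsilon>\<close>]])
  then show ?thesis
    by (simp add: slar_U_def)
qed

lemma slar_U_worst_perturbation:
  assumes "0 \<le> \<epsilon>"
  shows "slar_U D lam (worst_perturbation \<epsilon> w) w = robust_hinge_risk D \<epsilon> w + lam / 2 * (norm w)\<^sup>2"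
proof -
  have "(\<integral>p. max 0 (1 - snd p * (w \<bullet> (fst p + worst_perturbation \<epsilon> w p))) \<partial>D) = robust_hinge_risk D \<epsilon> w"
    unfolding robust_hinge_risk_def
  proof (intro integral_cong_AE)
    show "AE p in D. max 0 (1 - snd p * (w \<bullet> (fst p + worst_perturbation \<epsilon> w p)))
        = max 0 (1 - snd p * (w \<bullet> fst p) + \<epsilon> * norm_l1 w)"
      using AE_label by eventually_elim (metis hinge_worst_perturbation prod.collapse)
  qed (use perturbation_worst_perturbation[OF assms, of w] in \<open>auto simp: perturbation_def\<close>)
  then show ?thesis
    by (simp add: slar_U_def)
qed

lemma robust_hinge_risk_drop_coord_le:
  assumes "\<bar>\<mu> $ i\<bar> \<le> \<epsilon>"
  shows "robust_hinge_risk D \<epsilon> (drop_coord i w) \<le> robust_hinge_risk D \<epsilon> w"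
proof -
  define t where "t = w $ i"
  define c where "c = \<epsilon> * \<bar>t\<bar> - t * \<mu> $ i"
  define A where "A p = 1 - snd p * (drop_coord i w \<bullet> fst p) + \<epsilon> * norm_l1 (drop_coord i w)" for p
  define d where "d p = \<mu> $ i - snd p * fst p $ i" for p
  define g where "g p = (if 0 < A p + c then d p else 0)" for p
  have "t * \<mu> $ i \<le> \<epsilon> * \<bar>t\<bar>"
    using mult_left_mono[OF assms abs_ge_zero[of t]] by (metis abs_ge_self abs_mult mult.commute order_trans)
  then have "0 \<le> c"
    by (simp add: c_def)
  have [measurable]: "A \<in> borel_measurable D"
    unfolding A_def by measurable
  have g_centered: "integrable D g" "integral\<^sup>L D g = 0"
  proof -
    define G :: "real \<Rightarrow> ('d \<Rightarrow> real) \<Rightarrow> real" where "G y z =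
      (if 0 < 1 - y * (\<Sum>j\<in>UNIV - {i}. w $ j * z j) + \<epsilon> * norm_l1 (drop_coord i w) + c then 1 else 0)"
      for y z
    have G_eq: "G (snd p) (coords_except i (fst p)) = (if 0 < A p + c then 1 else 0)" for p
      by (simp add: G_def A_def inner_drop_coord_eq_sum_coords_except)
    have G_measurable: "G y \<in> borel_measurable (PiM (UNIV - {i}) (\<lambda>_. borel))" for y
      unfolding G_def by measurable
    have G_bound: "\<bar>G y z\<bar> \<le> 1" for y z
      by (simp add: G_def)
    have "(\<lambda>p. G (snd p) (coords_except i (fst p))) \<in> borel_measurable D"
      unfolding G_eq by measurable
    note centered = integral_centered_feature[OF G_measurable G_bound this]
    have "g = (\<lambda>p. G (snd p) (coords_except i (fst p)) * (\<mu> $ i - snd p * fst p $ i))"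
      by (simp add: fun_eq_iff G_eq g_def d_def)
    then show "integrable D g" "integral\<^sup>L D g = 0"
      using centered by simp_all
  qed
  have hinge_ge: "max 0 (A p) + t * g p \<le> max 0 (1 - snd p * (w \<bullet> fst p) + \<epsilon> * norm_l1 w)" for p
  proof -
    have "1 - snd p * (w \<bullet> fst p) + \<epsilon> * norm_l1 w = A p + c + t * d p"
      unfolding A_def c_def d_def t_def
      by (subst inner_drop_coord[of w _ i], subst norm_l1_drop_coord[of w i]) (simp add: algebra_simps)
    then show ?thesis
      unfolding g_def using hinge_shift_lower_bound[OF \<open>0 \<le> c\<close>] by simp
  qed
  have "0 \<le> \<epsilon>"
    using assms by (meson abs_ge_zero order_trans)
  have int_A: "integrable D (\<lambda>p. max 0 (A p))"
    unfolding A_def by (rule integrable_robust_hinge[OF \<open>0 \<le> \<epsilon>\<close>])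
  have int_Ag: "integrable D (\<lambda>p. max 0 (A p) + t * g p)"
    using int_A g_centered(1) by (intro Bochner_Integration.integrable_add Bochner_Integration.integrable_mult_right)
  have "robust_hinge_risk D \<epsilon> (drop_coord i w) = (\<integral>p. max 0 (A p) + t * g p \<partial>D)"
    using int_A g_centered
    by (subst Bochner_Integration.integral_add) (auto simp: robust_hinge_risk_def A_def)
  also have "\<dots> \<le> robust_hinge_risk D \<epsilon> w"
    unfolding robust_hinge_risk_def
    by (rule integral_mono[OF int_Ag integrable_robust_hinge[OF \<open>0 \<le> \<epsilon>\<close>] hinge_ge])
  finally show ?thesis .
qed

end

theorem mainTheorem14:
  fixes D :: "((real^'d) \<times> real) measure" and \<mu> :: "real^'d"
    and lam \<epsilon> :: real and \<delta>s :: "(real^'d) \<times> real \<Rightarrow> real^'d" and ws :: "real^'d"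
  assumes "slar_dist D \<mu>" and "lam > 0" and "\<epsilon> > 0"
    and "slar_nash D lam \<epsilon> \<delta>s ws"
  shows "\<forall>i. \<bar>\<mu> $ i\<bar> \<le> \<epsilon> \<longrightarrow> ws $ i = 0"
proof (intro allI impI)
  fix i assume non_robust: "\<bar>\<mu> $ i\<bar> \<le> \<epsilon>"
  interpret slar D \<mu> by (rule slar.intro) fact
  have \<delta>s: "perturbation D \<epsilon> \<delta>s"
    and adversary: "\<And>\<delta>. perturbation D \<epsilon> \<delta> \<Longrightarrow> slar_U D lam \<delta> ws \<le> slar_U D lam \<delta>s ws"
    and defender: "\<And>w. slar_U D lam \<delta>s ws \<le> slar_U D lam \<delta>s w"
    using assms(4) unfolding slar_nash_def by auto
  let ?w = "drop_coord i ws"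
  have "robust_hinge_risk D \<epsilon> ws + lam / 2 * (norm ws)\<^sup>2 = slar_U D lam (worst_perturbation \<epsilon> ws) ws"
    using assms(3) by (simp add: slar_U_worst_perturbation)
  also have "\<dots> \<le> slar_U D lam \<delta>s ?w"
    using adversary[OF perturbation_worst_perturbation] defender assms(3) by (meson less_imp_le order_trans)
  also have "\<dots> \<le> robust_hinge_risk D \<epsilon> ?w + lam / 2 * (norm ?w)\<^sup>2"
    by (rule slar_U_le_robust[OF \<delta>s])
  also have "\<dots> \<le> robust_hinge_risk D \<epsilon> ws + lam / 2 * (norm ?w)\<^sup>2"
    using robust_hinge_risk_drop_coord_le[OF non_robust] by simp
  finally have "lam / 2 * (ws $ i)\<^sup>2 \<le> 0"
    unfolding norm_drop_coord[of ws i] by (simp add: algebra_simps)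
  then show "ws $ i = 0"
    using assms(2) by (simp add: mult_le_0_iff)
qed

end
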